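(* Let $\mathcal{F}=\{f_1,\dots,f_{M_0},f_{M_0+1},\dots,f_{M_0+n}\}$ be homogeneous polynomials on $\mathbb{R}^n$ with $f_{M_0+j}(z)=z_j$ for $j=1,\dots,n$ (not necessarily satisfying any further property). Suppose there exists a set $V\subset\mathbb{R}^n$ with $\{0\}\subsetneq V$ such that for every $y\in\mathbb{R}^{M_0+n}\setminus\{0\}$ the restriction to $V$ of $\sum_{k=1}^{M_0+n}y_kf_k$ is either identically zero or changes sign (takes both strictly positive and strictly negative values) on $V$. Then there exists a non-trivial (non-Dirac) $\mu\in\mathbb{M}^{pc}_{\mathcal{F}}(0)$.
   Context: $\mathbb{M}^{pc}_{\mathcal{F}}(0)$ is the set of probability measures $\mu$ on $\mathbb{R}^n$ with $\int z\,d\mu=0$ and $\int f\,d\mu=f(\int z\,d\mu)$ for all $f\in\mathcal{F}$. *)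

theory Defs
  imports "HOL-Probability.Probability"
begin

definition hom_poly :: "nat \<Rightarrow> (real^'n \<Rightarrow> real) \<Rightarrow> bool" where
  "hom_poly d f \<longleftrightarrow>
     (\<exists>(A :: ('n \<Rightarrow> nat) set) (c :: ('n \<Rightarrow> nat) \<Rightarrow> real).
        finite A \<and> (\<forall>\<alpha>\<in>A. (\<Sum>i\<in>UNIV. \<alpha> i) = d) \<and>
        (\<forall>z. f z = (\<Sum>\<alpha>\<in>A. c \<alpha> * (\<Prod>i\<in>UNIV. (z $ i) ^ (\<alpha> i)))))"

definition homogeneous_polynomial :: "(real^'n \<Rightarrow> real) \<Rightarrow> bool" where
  "homogeneous_polynomial f \<longleftrightarrow> (\<exists>d. hom_poly d f)"

definition Mpc :: "(real^'n \<Rightarrow> real) set \<Rightarrow> (real^'n) measure set" where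
  "Mpc F = {\<mu>. prob_space \<mu> \<and> sets \<mu> = sets borel \<and>
              integrable \<mu> (\<lambda>z. z) \<and> (\<integral>z. z \<partial>\<mu>) = 0 \<and>
              (\<forall>f\<in>F. integrable \<mu> f \<and> (\<integral>z. f z \<partial>\<mu>) = f (\<integral>z. z \<partial>\<mu>))}"

end

theory Submission
  imports Defs
begin

(* Write \<Phi>(z) = (g_1(z), ..., g_M0(z), z). A finitely supported probability p on V - {0}
   whose \<Phi>-moments vanish is a non-Dirac element of M^pc_F(0), provided the g_k vanish at 0;
   homogeneity gives this except for constants, which the sign hypothesis excludes.
   Such p exists by a theorem of the alternative of Gordan type: otherwise some linear
   functional, i.e. some nonzero combination h of the g_k and coordinates, is nonnegative on
   \<Phi>(V - {0}) without vanishing there; as h 0 = 0, h would be nonnegative but not zero on V,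
   contradicting the sign hypothesis. The theorem of the alternative is proved by induction
   over the coordinates: a functional that is nonnegative on the slice {s. s m = 0} of a
   convex set meeting both sides of that hyperplane extends, as in the one-step Hahn-Banach
   argument, to one that is nonnegative on the whole set. *)

definition pointwise_convex :: "('i \<Rightarrow> real) set \<Rightarrow> bool" where
  "pointwise_convex S \<longleftrightarrow>
     (\<forall>x\<in>S. \<forall>y\<in>S. \<forall>u. 0 \<le> u \<and> u \<le> 1 \<longrightarrow> (\<lambda>i. u * x i + (1 - u) * y i) \<in> S)"

definition nonneg_functionals_vanish :: "'i set \<Rightarrow> ('i \<Rightarrow> real) set \<Rightarrow> bool" where
  "nonneg_functionals_vanish I S \<longleftrightarrow>
     (\<forall>c. (\<forall>s\<in>S. 0 \<le> (\<Sum>i\<in>I. c i * s i)) \<longrightarrow> (\<forall>s\<in>S. (\<Sum>i\<in>I. c i * s i) = 0))"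

lemma pointwise_convex_slice:
  assumes "pointwise_convex S"
  shows "pointwise_convex {s\<in>S. s m = 0}"
  using assms unfolding pointwise_convex_def by auto

lemma nonneg_functionals_vanish_subset:
  assumes "nonneg_functionals_vanish J S" "finite J" "I \<subseteq> J"
  shows "nonneg_functionals_vanish I S"
  unfolding nonneg_functionals_vanish_def
proof (intro allI impI)
  fix c :: "'a \<Rightarrow> real"
  define c' where "c' i = (if i \<in> I then c i else 0)" for i
  have restrict: "(\<Sum>i\<in>J. c' i * s i) = (\<Sum>i\<in>I. c i * s i)" for s :: "'a \<Rightarrow> real"
    using assms(2,3) unfolding c'_def by (intro sum.mono_neutral_cong_right) auto
  assume "\<forall>s\<in>S. 0 \<le> (\<Sum>i\<in>I. c i * s i)"
  then show "\<forall>s\<in>S. (\<Sum>i\<in>I. c i * s i) = 0"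
    using assms(1) unfolding nonneg_functionals_vanish_def restrict[symmetric] by blast
qed

lemma nonneg_functionals_vanish_coordinate:
  assumes "nonneg_functionals_vanish I S" "finite I" "m \<in> I" "\<forall>s\<in>S. 0 \<le> a * s m"
  shows "\<forall>s\<in>S. a * s m = 0"
proof -
  have coordinate: "(\<Sum>i\<in>I. (if i = m then a else 0) * s i) = a * s m" for s :: "'a \<Rightarrow> real"
    using assms(2,3) by (subst sum.mono_neutral_cong_right[of I "{m}"]) auto
  show ?thesis
    using assms(1)[unfolded nonneg_functionals_vanish_def, rule_format, of "\<lambda>i. if i = m then a else 0"]
      assms(4)
    unfolding coordinate by blast
qed

lemma pointwise_convex_crossing:
  assumes "pointwise_convex S" "p \<in> S" "q \<in> S" "p m > 0" "q m < 0"
  obtains s where "s \<in> S" "s m = 0" "\<And>i. (p m - q m) * s i = - q m * p i + p m * q i"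
proof -
  let ?u = "- q m / (p m - q m)"
  define s where "s i = ?u * p i + (1 - ?u) * q i" for i
  have "0 \<le> ?u" "?u \<le> 1" using assms(4,5) by (auto simp: field_simps)
  then have "s \<in> S"
    using assms(1-3) unfolding pointwise_convex_def s_def by blast
  moreover have mix: "(p m - q m) * s i = - q m * p i + p m * q i" for i
    using assms(4,5) unfolding s_def by (simp add: divide_simps)
  moreover have "s m = 0"
    using mix[of m] assms(4,5) by (simp add: algebra_simps)
  ultimately show thesis using that by blast
qed

lemma slice_nonneg_ratio_le:
  assumes "pointwise_convex S"
    and slice_nonneg: "\<And>s. s \<in> S \<Longrightarrow> s m = 0 \<Longrightarrow> 0 \<le> (\<Sum>i\<in>I. c i * s i)"
    and p: "p \<in> S" "p m > 0" and q: "q \<in> S" "q m < 0"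
  shows "- (\<Sum>i\<in>I. c i * p i) / p m \<le> (\<Sum>i\<in>I. c i * q i) / - q m"
proof -
  obtain s where s: "s \<in> S" "s m = 0" "\<And>i. (p m - q m) * s i = - q m * p i + p m * q i"
    using pointwise_convex_crossing[OF assms(1) p(1) q(1) p(2) q(2)] by blast
  have "(p m - q m) * (\<Sum>i\<in>I. c i * s i) = (\<Sum>i\<in>I. c i * ((p m - q m) * s i))"
    unfolding sum_distrib_left by (simp add: mult.left_commute)
  also have "\<dots> = - q m * (\<Sum>i\<in>I. c i * p i) + p m * (\<Sum>i\<in>I. c i * q i)"
    unfolding s(3) by (simp add: sum_distrib_left sum_subtractf sum_negf algebra_simps)
  moreover have "0 \<le> (p m - q m) * (\<Sum>i\<in>I. c i * s i)"
    using slice_nonneg[OF s(1,2)] p(2) q(2) by simp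
  ultimately show ?thesis
    using p(2) q(2) by (simp add: field_simps)
qed

lemma nonneg_functionals_vanish_slice:
  assumes vanish: "nonneg_functionals_vanish (insert m I) S"
    and "finite I" "m \<notin> I" "pointwise_convex S"
    and p: "p \<in> S" "p m > 0" and q: "q \<in> S" "q m < 0"
  shows "nonneg_functionals_vanish I {s\<in>S. s m = 0}"
  unfolding nonneg_functionals_vanish_def
proof (intro allI impI)
  fix c :: "'a \<Rightarrow> real"
  define L where "L s = (\<Sum>i\<in>I. c i * s i)" for s :: "'a \<Rightarrow> real"
  assume "\<forall>s\<in>{s\<in>S. s m = 0}. 0 \<le> (\<Sum>i\<in>I. c i * s i)"
  then have slice_nonneg: "0 \<le> L s" if "s \<in> S" "s m = 0" for s
    using that unfolding L_def by blast
  have crossing: "- L p' / p' m \<le> L q' / - q' m"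
    if "p' \<in> S" "p' m > 0" "q' \<in> S" "q' m < 0" for p' q'
    unfolding L_def
    by (rule slice_nonneg_ratio_le[OF \<open>pointwise_convex S\<close> _ that]) (use slice_nonneg in \<open>auto simp: L_def\<close>)
  define t where "t = Sup {- L p' / p' m | p'. p' \<in> S \<and> p' m > 0}"
  have below: "- L p' / p' m \<le> t" if "p' \<in> S" "p' m > 0" for p'
    unfolding t_def using that crossing[OF _ _ q]
    by (intro cSup_upper bdd_aboveI[of _ "L q / - q m"]) auto
  have above: "t \<le> L q' / - q' m" if "q' \<in> S" "q' m < 0" for q'
    unfolding t_def using that crossing p by (intro cSup_least) auto
  have extended: "(\<Sum>i\<in>insert m I. (c(m := t)) i * s i) = t * s m + L s" for s
    unfolding L_def using \<open>finite I\<close> \<open>m \<notin> I\<close> by (auto intro!: sum.cong)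
  have "0 \<le> t * s m + L s" if "s \<in> S" for s
  proof -
    consider "s m > 0" | "s m < 0" | "s m = 0" by linarith
    then show ?thesis
      using below[OF that] above[OF that] slice_nonneg[OF that] by cases (auto simp: field_simps)
  qed
  then have "t * s m + L s = 0" if "s \<in> S" for s
    using vanish that unfolding nonneg_functionals_vanish_def extended[symmetric] by blast
  then show "\<forall>s\<in>{s\<in>S. s m = 0}. (\<Sum>i\<in>I. c i * s i) = 0"
    unfolding L_def by force
qed

lemma nonneg_functionals_vanish_common_zero:
  assumes "finite I" "pointwise_convex S" "S \<noteq> {}" "nonneg_functionals_vanish I S"
  shows "\<exists>s\<in>S. \<forall>i\<in>I. s i = 0"
  using assms
proof (induction I arbitrary: S rule: finite_induct)
  case empty
  then show ?case by auto
next
  case (insert m I)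
  show ?case
  proof (cases "\<forall>s\<in>S. s m = 0")
    case True
    have "nonneg_functionals_vanish I S"
      using nonneg_functionals_vanish_subset[OF insert.prems(3)] insert.hyps(1) by blast
    then show ?thesis
      using insert.IH insert.prems(1,2) True by blast
  next
    case False
    then obtain s where s: "s \<in> S" "s m \<noteq> 0" by blast
    have coordinate: "\<forall>s\<in>S. 0 \<le> a * s m \<Longrightarrow> \<forall>s\<in>S. a * s m = 0" for a
      using nonneg_functionals_vanish_coordinate[OF insert.prems(3)] insert.hyps(1) by simp
    obtain p where p: "p \<in> S" "p m > 0"
      using coordinate[of "-1"] s by (force simp: not_less)
    obtain q where q: "q \<in> S" "q m < 0"
      using coordinate[of 1] s by (force simp: not_less)
    let ?slice = "{s\<in>S. s m = 0}"
    obtain s0 where "s0 \<in> S" "s0 m = 0"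
      using pointwise_convex_crossing[OF insert.prems(1) p(1) q(1) p(2) q(2)] by metis
    then have "?slice \<noteq> {}" by blast
    moreover have "nonneg_functionals_vanish I ?slice"
      using nonneg_functionals_vanish_slice[OF insert.prems(3) insert.hyps insert.prems(1) p q] .
    ultimately show ?thesis
      using insert.IH[of ?slice] pointwise_convex_slice[OF insert.prems(1)] by auto
  qed
qed

lemma pointwise_convex_pmf_expectations:
  fixes F :: "'i \<Rightarrow> 'a \<Rightarrow> real"
  shows "pointwise_convex
    {(\<lambda>i. measure_pmf.expectation p (F i)) | p. finite (set_pmf p) \<and> set_pmf p \<subseteq> X}"
  unfolding pointwise_convex_def
proof (clarify)
  fix p q :: "'a pmf" and u :: real
  assume p: "finite (set_pmf p)" "set_pmf p \<subseteq> X" and q: "finite (set_pmf q)" "set_pmf q \<subseteq> X"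
    and u: "0 \<le> u" "u \<le> 1"
  define r where "r = bernoulli_pmf u \<bind> (\<lambda>b. if b then p else q)"
  have "set_pmf r \<subseteq> set_pmf p \<union> set_pmf q"
    unfolding r_def by (auto split: if_splits)
  then have "finite (set_pmf r)" "set_pmf r \<subseteq> X"
    using p q by (auto intro: finite_subset)
  moreover have "measure_pmf.expectation r f =
      u * measure_pmf.expectation p f + (1 - u) * measure_pmf.expectation q f" for f :: "'a \<Rightarrow> real"
    unfolding r_def using p(1) q(1) u by (subst pmf_expectation_bind[of UNIV]) (auto simp: UNIV_bool)
  ultimately show "\<exists>r. (\<lambda>i. u * measure_pmf.expectation p (F i) + (1 - u) * measure_pmf.expectation q (F i)) =
      (\<lambda>i. measure_pmf.expectation r (F i)) \<and> finite (set_pmf r) \<and> set_pmf r \<subseteq> X"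
    by (intro exI[of _ r]) auto
qed

lemma expectation_linear_combination:
  fixes F :: "'i \<Rightarrow> 'a \<Rightarrow> real"
  assumes "finite (set_pmf p)"
  shows "(\<Sum>i\<in>I. c i * measure_pmf.expectation p (F i)) =
    measure_pmf.expectation p (\<lambda>x. \<Sum>i\<in>I. c i * F i x)"
  using assms by (simp add: integrable_measure_pmf_finite)

lemma exists_pmf_zero_expectations:
  fixes F :: "'i \<Rightarrow> 'a \<Rightarrow> real"
  assumes "finite I" "X \<noteq> {}"
    and nonneg_vanish: "\<And>c. \<forall>x\<in>X. 0 \<le> (\<Sum>i\<in>I. c i * F i x) \<Longrightarrow> \<forall>x\<in>X. (\<Sum>i\<in>I. c i * F i x) = 0"
  obtains p where "finite (set_pmf p)" "set_pmf p \<subseteq> X"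
    "\<And>i. i \<in> I \<Longrightarrow> measure_pmf.expectation p (F i) = 0"
proof -
  define S where "S = {(\<lambda>i. measure_pmf.expectation p (F i)) | p. finite (set_pmf p) \<and> set_pmf p \<subseteq> X}"
  have return_in_S: "(\<lambda>i. F i x) \<in> S" if "x \<in> X" for x
    unfolding S_def using that by (auto intro!: exI[of _ "return_pmf x"])
  have "nonneg_functionals_vanish I S"
    unfolding nonneg_functionals_vanish_def
  proof (intro allI impI)
    fix c
    assume "\<forall>s\<in>S. 0 \<le> (\<Sum>i\<in>I. c i * s i)"
    then have "\<forall>x\<in>X. 0 \<le> (\<Sum>i\<in>I. c i * F i x)"
      using return_in_S by fastforce
    then have vanish: "\<forall>x\<in>X. (\<Sum>i\<in>I. c i * F i x) = 0"
      by (rule nonneg_vanish)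
    show "\<forall>s\<in>S. (\<Sum>i\<in>I. c i * s i) = 0"
    proof
      fix s assume "s \<in> S"
      then obtain p where p: "finite (set_pmf p)" "set_pmf p \<subseteq> X"
        and s: "s = (\<lambda>i. measure_pmf.expectation p (F i))"
        unfolding S_def by blast
      have "measure_pmf.expectation p (\<lambda>x. \<Sum>i\<in>I. c i * F i x) = 0"
        using vanish p(2) by (subst integral_cong_AE[where g = "\<lambda>_. 0"]) (auto simp: AE_measure_pmf_iff)
      then show "(\<Sum>i\<in>I. c i * s i) = 0"
        unfolding s expectation_linear_combination[OF p(1)] .
    qed
  qed
  moreover have "S \<noteq> {}"
    using return_in_S \<open>X \<noteq> {}\<close> by blast
  ultimately obtain s where "s \<in> S" "\<forall>i\<in>I. s i = 0"
    using nonneg_functionals_vanish_common_zero[OF \<open>finite I\<close> pointwise_convex_pmf_expectations]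
    unfolding S_def by blast
  then show thesis
    using that unfolding S_def by blast
qed

lemma hom_poly_vanishes_at_0:
  fixes f :: "real^'n \<Rightarrow> real"
  assumes "hom_poly d f" "0 < d"
  shows "f 0 = 0"
proof -
  obtain A c where A: "finite A" "\<forall>\<alpha>\<in>A. (\<Sum>i\<in>UNIV. \<alpha> i) = d"
    and f: "\<forall>z. f z = (\<Sum>\<alpha>\<in>A. c \<alpha> * (\<Prod>i\<in>UNIV. (z $ i) ^ (\<alpha> i)))"
    using assms(1) unfolding hom_poly_def by blast
  have zero_monomial: "(\<Prod>i\<in>UNIV. (0::real) ^ (\<alpha> i)) = 0" if "\<alpha> \<in> A" for \<alpha>
  proof -
    have "(\<Sum>i\<in>UNIV. \<alpha> i) \<noteq> 0"
      using A(2) that assms(2) by simp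
    then obtain i where "\<alpha> i \<noteq> 0"
      by (meson sum.neutral)
    then show ?thesis by (intro prod_zero) auto
  qed
  show ?thesis
    using f by (simp add: zero_monomial)
qed

lemma hom_poly_0_constant:
  fixes f :: "real^'n \<Rightarrow> real"
  assumes "hom_poly 0 f"
  shows "f z = f 0"
proof -
  obtain A c where A: "\<forall>\<alpha>\<in>A. (\<Sum>i\<in>UNIV. \<alpha> i) = 0"
    and f: "\<forall>z. f z = (\<Sum>\<alpha>\<in>A. c \<alpha> * (\<Prod>i\<in>UNIV. (z $ i) ^ (\<alpha> i)))"
    using assms unfolding hom_poly_def by blast
  have "(\<Prod>i\<in>UNIV. (y $ i) ^ (\<alpha> i)) = 1" if "\<alpha> \<in> A" for \<alpha> and y :: "real^'n"
  proof -
    have "\<forall>i. \<alpha> i = 0" using A that by simp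
    then show ?thesis by simp
  qed
  then show ?thesis
    using f by simp
qed

lemma homogeneous_polynomial_borel_measurable:
  assumes "homogeneous_polynomial f"
  shows "f \<in> borel_measurable borel"
proof -
  obtain A c where "\<forall>z. f z = (\<Sum>\<alpha>\<in>A. c \<alpha> * (\<Prod>i\<in>UNIV. (z $ i) ^ (\<alpha> i)))"
    using assms unfolding homogeneous_polynomial_def hom_poly_def by blast
  then have "f = (\<lambda>z. \<Sum>\<alpha>\<in>A. c \<alpha> * (\<Prod>i\<in>UNIV. (z $ i) ^ (\<alpha> i)))" by auto
  also have "\<dots> \<in> borel_measurable borel"
    by (intro borel_measurable_continuous_onI continuous_intros)
  finally show ?thesis .
qed

lemma distr_pmf_in_Mpc:
  fixes p :: "(real^'n) pmf"
  assumes finite: "finite (set_pmf p)" and centered: "measure_pmf.expectation p (\<lambda>z. z) = 0"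
    and F: "\<And>f. f \<in> F \<Longrightarrow> f \<in> borel_measurable borel \<and> measure_pmf.expectation p f = f 0"
  shows "distr (measure_pmf p) borel (\<lambda>z. z) \<in> Mpc F"
proof -
  let ?\<mu> = "distr (measure_pmf p) borel (\<lambda>z. z)"
  have moments: "integrable ?\<mu> f \<and> integral\<^sup>L ?\<mu> f = measure_pmf.expectation p f"
    if "f \<in> borel_measurable borel" for f :: "real^'n \<Rightarrow> 'b::{banach, second_countable_topology}"
    using that finite by (simp add: integrable_distr_eq integral_distr integrable_measure_pmf_finite)
  have "prob_space ?\<mu>"
    by (rule measure_pmf.prob_space_distr) simp
  moreover have "integrable ?\<mu> (\<lambda>z. z)" "(\<integral>z. z \<partial>?\<mu>) = 0"
    using moments[of "\<lambda>z. z"] centered by simp_all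
  moreover have "integrable ?\<mu> f \<and> (\<integral>z. f z \<partial>?\<mu>) = f 0" if "f \<in> F" for f
    using F[OF that] moments[of f] by simp
  ultimately show ?thesis
    unfolding Mpc_def by simp
qed

lemma distr_pmf_not_return:
  fixes p :: "'a::euclidean_space pmf"
  assumes "finite (set_pmf p)" "measure_pmf.expectation p (\<lambda>z. z) = 0" "0 \<notin> set_pmf p"
  shows "distr (measure_pmf p) borel (\<lambda>z. z) \<noteq> return borel x"
proof
  assume return: "distr (measure_pmf p) borel (\<lambda>z. z) = return borel x"
  have "x = (\<integral>z. z \<partial>return borel x)"
    by (simp add: integral_return)
  also have "\<dots> = 0"
    using assms(1,2) unfolding return[symmetric]
    by (simp add: integral_distr)
  finally have "emeasure (measure_pmf p) {0} = 1"
    using return emeasure_distr[of "\<lambda>z. z" "measure_pmf p" borel "{0}"] by simp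
  then show False
    using assms(3) by (simp add: emeasure_pmf_single set_pmf_iff)
qed

definition family_comb ::
  "nat \<Rightarrow> (nat \<Rightarrow> real^'n \<Rightarrow> real) \<Rightarrow> (nat \<Rightarrow> real) \<Rightarrow> real^'n \<Rightarrow> real^'n \<Rightarrow> real" where
  "family_comb M0 g a b z = (\<Sum>k<M0. a k * g k z) + (\<Sum>j\<in>UNIV. b $ j * z $ j)"

definition zero_or_sign_changing :: "'a set \<Rightarrow> ('a \<Rightarrow> real) \<Rightarrow> bool" where
  "zero_or_sign_changing V h \<longleftrightarrow> (\<forall>z\<in>V. h z = 0) \<or> ((\<exists>z\<in>V. 0 < h z) \<and> (\<exists>z\<in>V. h z < 0))"

lemma hom_polys_vanish_at_0:
  assumes hom: "\<forall>k<M0. homogeneous_polynomial (g k)" and "0 \<in> V"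
    and sign: "\<And>a b. (\<exists>k<M0. a k \<noteq> 0) \<or> b \<noteq> 0 \<Longrightarrow> zero_or_sign_changing V (family_comb M0 g a b)"
    and "k < M0"
  shows "g k 0 = 0"
proof -
  obtain d where d: "hom_poly d (g k)"
    using hom \<open>k < M0\<close> unfolding homogeneous_polynomial_def by blast
  show ?thesis
  proof (cases "d = 0")
    case False
    then show ?thesis using hom_poly_vanishes_at_0[OF d] by simp
  next
    case True
    let ?a = "\<lambda>i. if i = k then 1 else 0"
    have "family_comb M0 g ?a 0 z = g k 0" for z
    proof -
      have "family_comb M0 g ?a 0 z = g k z"
        unfolding family_comb_def using \<open>k < M0\<close>
        by (subst sum.mono_neutral_cong_right[of "{..<M0}" "{k}"]) auto
      then show ?thesis
        using hom_poly_0_constant[of "g k" z] d True by simp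
    qed
    moreover have "zero_or_sign_changing V (family_comb M0 g ?a 0)"
      using sign \<open>k < M0\<close> by auto
    ultimately show ?thesis
      using \<open>0 \<in> V\<close> unfolding zero_or_sign_changing_def by auto
  qed
qed

lemma family_comb_nonneg_vanishes:
  assumes g0: "\<forall>k<M0. g k 0 = 0"
    and sign: "\<And>a b. (\<exists>k<M0. a k \<noteq> 0) \<or> b \<noteq> 0 \<Longrightarrow> zero_or_sign_changing V (family_comb M0 g a b)"
    and nonneg: "\<forall>z\<in>V - {0}. 0 \<le> family_comb M0 g a b z"
  shows "\<forall>z\<in>V. family_comb M0 g a b z = 0"
proof (cases "(\<exists>k<M0. a k \<noteq> 0) \<or> b \<noteq> 0")
  case True
  have "family_comb M0 g a b 0 = 0"
    using g0 by (simp add: family_comb_def)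
  then have "\<forall>z\<in>V. 0 \<le> family_comb M0 g a b z"
    using nonneg by (metis DiffI order_refl singletonD)
  then show ?thesis
    using sign[OF True] unfolding zero_or_sign_changing_def by force
next
  case False
  then show ?thesis by (simp add: family_comb_def)
qed

theorem lemma2:
  fixes M0 :: nat
    and g :: "nat \<Rightarrow> (real^'n \<Rightarrow> real)"
    and V :: "(real^'n) set"
  assumes hom: "\<forall>k<M0. homogeneous_polynomial (g k)"
    and V0: "0 \<in> V" and Vne: "V \<noteq> {0}"
    and sign: "\<forall>(a :: nat \<Rightarrow> real) (b :: real^'n).
       (\<exists>k<M0. a k \<noteq> 0) \<or> b \<noteq> 0 \<longrightarrow>
       (let h = (\<lambda>z. (\<Sum>k<M0. a k * g k z) + (\<Sum>j\<in>UNIV. b $ j * z $ j)) in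
          (\<forall>z\<in>V. h z = 0) \<or> ((\<exists>z\<in>V. h z > 0) \<and> (\<exists>z\<in>V. h z < 0)))"
  shows "\<exists>\<mu>\<in>Mpc (g ` {..<M0} \<union> range (\<lambda>j z. z $ j)). \<not> (\<exists>x. \<mu> = return borel x)"
proof -
  have sign': "zero_or_sign_changing V (family_comb M0 g a b)"
    if "(\<exists>k<M0. a k \<noteq> 0) \<or> b \<noteq> 0" for a b
    using sign[rule_format, OF that] unfolding zero_or_sign_changing_def family_comb_def Let_def .
  have g0: "\<forall>k<M0. g k 0 = 0"
    using hom_polys_vanish_at_0[OF hom V0 sign'] by blast
  define G where "G i z = (case i of Inl k \<Rightarrow> g k z | Inr j \<Rightarrow> z $ j)" for i and z :: "real^'n"
  define I :: "(nat + 'n) set" where "I = Inl ` {..<M0} \<union> range Inr"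
  have G_comb: "(\<Sum>i\<in>I. c i * G i z) = family_comb M0 g (\<lambda>k. c (Inl k)) (\<chi> j. c (Inr j)) z" for c z
    unfolding I_def G_def family_comb_def by (subst sum.union_disjoint) (auto simp: sum.reindex)
  have "finite I" "V - {0} \<noteq> {}"
    using V0 Vne unfolding I_def by auto
  moreover have "\<forall>z\<in>V - {0}. (\<Sum>i\<in>I. c i * G i z) = 0"
    if "\<forall>z\<in>V - {0}. 0 \<le> (\<Sum>i\<in>I. c i * G i z)" for c
    using family_comb_nonneg_vanishes[OF g0 sign'] that unfolding G_comb by blast
  ultimately obtain p where p: "finite (set_pmf p)" "set_pmf p \<subseteq> V - {0}"
    and moments: "\<And>i. i \<in> I \<Longrightarrow> measure_pmf.expectation p (G i) = 0"
    using exists_pmf_zero_expectations[of I "V - {0}" G] by blast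
  have moment_g: "measure_pmf.expectation p (g k) = 0" if "k < M0" for k
    using moments[of "Inl k"] that unfolding I_def G_def by (simp add: eta_contract_eq)
  have moment_coordinate: "measure_pmf.expectation p (\<lambda>z. z $ j) = 0" for j
    using moments[of "Inr j"] unfolding I_def G_def by simp
  have centered: "measure_pmf.expectation p (\<lambda>z. z) = 0"
    using moment_coordinate p(1)
    by (simp add: vec_eq_iff integral_bounded_linear[OF bounded_linear_vec_nth integrable_measure_pmf_finite])
  let ?\<mu> = "distr (measure_pmf p) borel (\<lambda>z. z)"
  have "?\<mu> \<in> Mpc (g ` {..<M0} \<union> range (\<lambda>j z. z $ j))"
  proof (rule distr_pmf_in_Mpc[OF p(1) centered])
    fix f assume "f \<in> g ` {..<M0} \<union> range (\<lambda>j z. z $ j)"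
    then consider k where "k < M0" "f = g k" | j where "f = (\<lambda>z. z $ j)"
      by blast
    then show "f \<in> borel_measurable borel \<and> measure_pmf.expectation p f = f 0"
    proof cases
      case 1
      then show ?thesis
        using moment_g g0 hom homogeneous_polynomial_borel_measurable[of "g k"] by simp
    next
      case 2
      then show ?thesis
        using moment_coordinate by simp
    qed
  qed
  moreover have "\<forall>x. ?\<mu> \<noteq> return borel x"
    using distr_pmf_not_return[OF p(1) centered] p(2) by blast
  ultimately show ?thesis by auto
qed

end
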